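(* For $n\ge1$, $\left| \Pi_n \wr C_2 (1^11^1, 1^11^2, 1^21^1, 1^12^2)\right|=n+1$.
   Context: For $n\ge0$ let $[n]=\{1,\dots,n\}$. A $2$-colored set partition of $[n]$ is a set partition of $[n]$ together with an assignment of a color from $\{1,2\}$ to each element; $\Pi_n\wr C_2$ is the set of these. For a set $S$ of patterns, $\Pi_n\wr C_2(S)$ is the set of such colored partitions avoiding every pattern in $S$ in the pattern sense. For the patterns used here: $\sigma$ contains $1^11^1$ iff two elements in the same block have the same color; $1^11^2$ iff there are $i<j$ in the same block with $i$ colored $1$ and $j$ colored $2$; $1^21^1$ iff there are $i<j$ in the same block with $i$ colored $2$ and $j$ colored $1$; $1^12^2$ iff there are $i<j$ in different blocks with $i$ colored $1$ and $j$ colored $2$. *)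

theory Defs
  imports Main "HOL-Library.FuncSet" "HOL-Library.Disjoint_Sets"
begin

definition colored_partitions :: "nat \<Rightarrow> (nat set set \<times> (nat \<Rightarrow> nat)) set" where
  "colored_partitions n =
     {(P, c). partition_on {1..n} P \<and> c \<in> {1..n} \<rightarrow>\<^sub>E {1, 2}}"

definition same_block :: "nat set set \<Rightarrow> nat \<Rightarrow> nat \<Rightarrow> bool" where
  "same_block P i j \<longleftrightarrow> (\<exists>B\<in>P. i \<in> B \<and> j \<in> B)"

definition contains_p11_11 :: "nat set set \<times> (nat \<Rightarrow> nat) \<Rightarrow> bool" where
  "contains_p11_11 \<sigma> \<longleftrightarrow>
     (\<exists>i j. i < j \<and> same_block (fst \<sigma>) i j \<and> snd \<sigma> i = snd \<sigma> j)"

definition contains_p11_12 :: "nat set set \<times> (nat \<Rightarrow> nat) \<Rightarrow> bool" where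
  "contains_p11_12 \<sigma> \<longleftrightarrow>
     (\<exists>i j. i < j \<and> same_block (fst \<sigma>) i j \<and> snd \<sigma> i = 1 \<and> snd \<sigma> j = 2)"

definition contains_p12_11 :: "nat set set \<times> (nat \<Rightarrow> nat) \<Rightarrow> bool" where
  "contains_p12_11 \<sigma> \<longleftrightarrow>
     (\<exists>i j. i < j \<and> same_block (fst \<sigma>) i j \<and> snd \<sigma> i = 2 \<and> snd \<sigma> j = 1)"

definition contains_p11_22 :: "nat set set \<times> (nat \<Rightarrow> nat) \<Rightarrow> bool" where
  "contains_p11_22 \<sigma> \<longleftrightarrow>
     (\<exists>i j. i < j \<and> i \<in> \<Union>(fst \<sigma>) \<and> j \<in> \<Union>(fst \<sigma>) \<and>
            \<not> same_block (fst \<sigma>) i j \<and> snd \<sigma> i = 1 \<and> snd \<sigma> j = 2)"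

end

theory Submission
  imports Defs
begin

text \<open>The three same-block patterns cover every coloured pair inside a block, so each block is a
  singleton; the partition is then the discrete one, and "different blocks" means "distinct
  elements". Avoiding \<open>1\<^sup>12\<^sup>2\<close> then says that no element of colour 1 precedes one
  of colour 2, i.e. the colouring is 2 on an initial segment \<open>{1..k}\<close> and 1 afterwards,
  one colouring for each \<open>k \<in> {0..n}\<close>.\<close>

definition threshold_colouring :: "nat \<Rightarrow> nat \<Rightarrow> nat \<Rightarrow> nat" where
  "threshold_colouring n k = (\<lambda>i\<in>{1..n}. if i \<le> k then 2 else 1)"

lemma threshold_colouring_in_PiE: "threshold_colouring n k \<in> {1..n} \<rightarrow>\<^sub>E {1, 2}"
  unfolding threshold_colouring_def by auto

lemma inj_on_threshold_colouring: "inj_on (threshold_colouring n) {0..n}"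
proof (rule inj_onI)
  fix a b assume ab: "a \<in> {0..n}" "b \<in> {0..n}" and eq: "threshold_colouring n a = threshold_colouring n b"
  show "a = b"
  proof (rule ccontr)
    assume "a \<noteq> b"
    then have "threshold_colouring n a (max a b) \<noteq> threshold_colouring n b (max a b)"
      using ab unfolding threshold_colouring_def by (auto simp: max_def)
    then show False using eq by simp
  qed
qed

lemma threshold_colouring_if_no_ascent:
  assumes c: "c \<in> {1..n} \<rightarrow>\<^sub>E {1, 2}"
    and no_ascent: "\<And>i j. i \<in> {1..n} \<Longrightarrow> j \<in> {1..n} \<Longrightarrow> i < j \<Longrightarrow> c i = 1 \<Longrightarrow> c j \<noteq> 2"
  shows "\<exists>k\<le>n. c = threshold_colouring n k"
proof -
  define S where "S = {0} \<union> {i \<in> {1..n}. c i = 2}"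
  define k where "k = Max S"
  have "finite S" unfolding S_def by auto
  then have above_k: "\<And>i. i \<in> {1..n} \<Longrightarrow> c i = 2 \<Longrightarrow> i \<le> k"
    unfolding k_def S_def by auto
  have "k \<in> S"
    unfolding k_def using \<open>finite S\<close> by (rule Max_in) (simp add: S_def)
  then have k_cases: "k = 0 \<or> k \<in> {1..n} \<and> c k = 2"
    unfolding S_def by auto
  then have k_le: "k \<le> n" by auto
  have "c i = threshold_colouring n k i" for i
  proof (cases "i \<in> {1..n}")
    case False
    then show ?thesis using c unfolding threshold_colouring_def by (auto simp: PiE_def extensional_def)
  next
    case i: True
    have colour: "c i \<in> {1, 2}" using c i by auto
    have "c i = 2 \<longleftrightarrow> i \<le> k"
    proof
      assume "c i = 2"
      then show "i \<le> k" using above_k i by blast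
    next
      assume "i \<le> k"
      then consider "i < k" | "i = k" by linarith
      then show "c i = 2"
        using no_ascent[OF i, of k] k_cases i colour by cases auto
    qed
    then show ?thesis using i colour unfolding threshold_colouring_def by auto
  qed
  then show ?thesis using k_le by blast
qed

lemma partition_on_eq_singletons:
  assumes P: "partition_on A P" and trivial: "\<And>B i j. B \<in> P \<Longrightarrow> i \<in> B \<Longrightarrow> j \<in> B \<Longrightarrow> i = j"
  shows "P = (\<lambda>i. {i}) ` A"
proof -
  have "B \<in> P \<longleftrightarrow> (\<exists>i\<in>A. B = {i})" for B
  proof
    assume B: "B \<in> P"
    then obtain i where i: "i \<in> B" using partition_onD3[OF P] by (metis ex_in_conv)
    then have "B = {i}" using trivial[OF B] by blast
    moreover have "i \<in> A" using partition_onD1[OF P] B i by blast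
    ultimately show "\<exists>i\<in>A. B = {i}" by blast
  next
    assume "\<exists>i\<in>A. B = {i}"
    then obtain i where "i \<in> A" and B: "B = {i}" by blast
    then obtain C where C: "C \<in> P" "i \<in> C" using partition_onD1[OF P] by blast
    then have "C = {i}" using trivial[OF C(1)] by blast
    then show "B \<in> P" using C B by simp
  qed
  then show ?thesis by auto
qed

lemma same_block_singletons_iff: "same_block ((\<lambda>i. {i}) ` A) i j \<longleftrightarrow> i = j \<and> i \<in> A"
  unfolding same_block_def by auto

lemma same_block_trivial_if_avoids:
  assumes "(P, c) \<in> colored_partitions n"
    and "\<not> contains_p11_11 (P, c)" "\<not> contains_p11_12 (P, c)" "\<not> contains_p12_11 (P, c)"
    and "same_block P i j"
  shows "i = j"
proof -
  have "\<Union>P = {1..n}" and c: "c \<in> {1..n} \<rightarrow>\<^sub>E {1, 2}"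
    using assms(1) unfolding colored_partitions_def partition_on_def by auto
  have no_pair: False if "l < m" "same_block P l m" for l m
  proof -
    have "l \<in> {1..n}" "m \<in> {1..n}"
      using that(2) \<open>\<Union>P = {1..n}\<close> unfolding same_block_def by auto
    then have "c l \<in> {1, 2}" "c m \<in> {1, 2}" using c by auto
    then consider "c l = c m" | "c l = 1 \<and> c m = 2" | "c l = 2 \<and> c m = 1" by auto
    then show False
      using assms(2-4) that unfolding contains_p11_11_def contains_p11_12_def contains_p12_11_def
      by cases auto
  qed
  have "same_block P j i" using assms(5) unfolding same_block_def by auto
  then show "i = j"
    using no_pair[OF _ assms(5)] no_pair[of j i] by (meson linorder_neqE_nat)
qed

lemma threshold_colouring_avoids:
  assumes \<sigma>: "\<sigma> = ((\<lambda>i. {i}) ` {1..n}, threshold_colouring n k)"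
  shows "\<sigma> \<in> colored_partitions n" and "\<not> contains_p11_11 \<sigma>" and "\<not> contains_p11_12 \<sigma>"
    and "\<not> contains_p12_11 \<sigma>" and "\<not> contains_p11_22 \<sigma>"
proof -
  show "\<sigma> \<in> colored_partitions n"
    using partition_on_singletons threshold_colouring_in_PiE \<sigma> unfolding colored_partitions_def by auto
  show "\<not> contains_p11_11 \<sigma>" "\<not> contains_p11_12 \<sigma>" "\<not> contains_p12_11 \<sigma>"
    unfolding \<sigma> contains_p11_11_def contains_p11_12_def contains_p12_11_def
    by (simp_all add: same_block_singletons_iff)
  show "\<not> contains_p11_22 \<sigma>"
    unfolding \<sigma> contains_p11_22_def by (auto simp: threshold_colouring_def split: if_splits)
qed

lemma avoider_is_threshold_colouring:
  assumes \<sigma>: "(P, c) \<in> colored_partitions n"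
    and avoids: "\<not> contains_p11_11 (P, c)" "\<not> contains_p11_12 (P, c)" "\<not> contains_p12_11 (P, c)"
      "\<not> contains_p11_22 (P, c)"
  shows "\<exists>k\<le>n. (P, c) = ((\<lambda>i. {i}) ` {1..n}, threshold_colouring n k)"
proof -
  have P: "partition_on {1..n} P" and c: "c \<in> {1..n} \<rightarrow>\<^sub>E {1, 2}"
    using \<sigma> unfolding colored_partitions_def by auto
  have P_eq: "P = (\<lambda>i. {i}) ` {1..n}"
    using partition_on_eq_singletons[OF P] same_block_trivial_if_avoids[OF \<sigma> avoids(1-3)]
    unfolding same_block_def by blast
  have "c j \<noteq> 2" if "i \<in> {1..n}" "j \<in> {1..n}" "i < j" "c i = 1" for i j
  proof
    assume "c j = 2"
    have "\<not> same_block P i j" using \<open>i < j\<close> unfolding P_eq same_block_singletons_iff by simp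
    moreover have "i \<in> \<Union>P" "j \<in> \<Union>P" using that(1,2) partition_onD1[OF P] by auto
    ultimately have "contains_p11_22 (P, c)"
      using that(3,4) \<open>c j = 2\<close> unfolding contains_p11_22_def fst_conv snd_conv by blast
    then show False using avoids(4) by simp
  qed
  then show ?thesis
    using threshold_colouring_if_no_ascent[OF c] P_eq by blast
qed

lemma avoiders_eq_threshold_colourings:
  "{\<sigma> \<in> colored_partitions n.
      \<not> contains_p11_11 \<sigma> \<and> \<not> contains_p11_12 \<sigma> \<and>
      \<not> contains_p12_11 \<sigma> \<and> \<not> contains_p11_22 \<sigma>}
   = (\<lambda>k. ((\<lambda>i. {i}) ` {1..n}, threshold_colouring n k)) ` {0..n}"
  (is "?avoiders = ?thresholds")
proof (intro equalityI subsetI)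
  fix \<sigma> assume "\<sigma> \<in> ?thresholds"
  then obtain k where threshold: "\<sigma> = ((\<lambda>i. {i}) ` {1..n}, threshold_colouring n k)" by blast
  show "\<sigma> \<in> ?avoiders"
    using threshold_colouring_avoids[OF threshold] by simp
next
  fix \<sigma> assume avoider: "\<sigma> \<in> ?avoiders"
  obtain P c where \<sigma>: "\<sigma> = (P, c)" by fastforce
  have "(P, c) \<in> colored_partitions n" "\<not> contains_p11_11 (P, c)" "\<not> contains_p11_12 (P, c)"
    "\<not> contains_p12_11 (P, c)" "\<not> contains_p11_22 (P, c)"
    using avoider unfolding \<sigma> by simp_all
  then obtain k where "k \<le> n" "(P, c) = ((\<lambda>i. {i}) ` {1..n}, threshold_colouring n k)"
    by (blast dest: avoider_is_threshold_colouring)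
  then show "\<sigma> \<in> ?thresholds"
    unfolding \<sigma> by simp
qed

theorem mainTheorem18:
  fixes n :: nat
  assumes "n \<ge> 1"
  shows "card {\<sigma> \<in> colored_partitions n.
            \<not> contains_p11_11 \<sigma> \<and> \<not> contains_p11_12 \<sigma> \<and>
            \<not> contains_p12_11 \<sigma> \<and> \<not> contains_p11_22 \<sigma>} = n + 1"
proof -
  have "inj_on (\<lambda>k. ((\<lambda>i. {i}) ` {1..n}, threshold_colouring n k)) {0..n}"
    using inj_on_threshold_colouring by (auto simp: inj_on_def)
  then show ?thesis
    unfolding avoiders_eq_threshold_colourings by (simp add: card_image)
qed

end
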